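(* Let $A\overset{i}{\to}U\overset{j}{\to}S$ be an extension of a semilattice of groups $A$ by an inverse semigroup $S$, $\rho$ a transversal of $j$, and $\Lambda=(\alpha,\lambda,f)$ the twisted $S$-module structure on $A$ induced by $\rho$. Then $\Lambda$ is a Sieben twisted $S$-module structure, i.e. $f(s,e)=\alpha(ses^{-1})$ and $f(e,s)=\alpha(ess^{-1})$ for all $s\in S$ and $e\in E(S)$, if and only if $\rho$ is order-preserving ($s\le t\Rightarrow\rho(s)\le\rho(t)$ in the natural partial orders).
   Context: A semilattice of groups is an inverse semigroup $A$ whose idempotents are central; $A_e=\{a: aa^{-1}=a^{-1}a=e\}$. An extension of $A$ by $S$ is an inverse semigroup $U$ with a monomorphism $i:A\to U$ and an idempotent-separating epimorphism $j:U\to S$ with $i(A)=j^{-1}(E(S))$. A transversal of $j$ is $\rho:S\to U$ with $j\circ\rho=\mathrm{id}_S$ and $\rho(E(S))\subseteq E(U)$. The induced structure: $\alpha=i^{-1}\circ\rho|_{E(S)}$, $\lambda_s(a)=i^{-1}(\rho(s)i(a)\rho(s)^{-1})$, and $f(s,t)$ the unique element of $A_{\alpha(stt^{-1}s^{-1})}$ with $\rho(s)\rho(t)=i(f(s,t))\rho(st)$. *)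

theory Defs
  imports Main
begin

definition semigroup_on :: "'a set \<Rightarrow> ('a \<Rightarrow> 'a \<Rightarrow> 'a) \<Rightarrow> bool" where
  "semigroup_on S m \<longleftrightarrow> (\<forall>a\<in>S. \<forall>b\<in>S. m a b \<in> S) \<and>
     (\<forall>a\<in>S. \<forall>b\<in>S. \<forall>c\<in>S. m (m a b) c = m a (m b c))"

definition inverse_semigroup :: "'a set \<Rightarrow> ('a \<Rightarrow> 'a \<Rightarrow> 'a) \<Rightarrow> bool" where
  "inverse_semigroup S m \<longleftrightarrow> semigroup_on S m \<and>
     (\<forall>a\<in>S. \<exists>!b. b \<in> S \<and> m (m a b) a = a \<and> m (m b a) b = b)"

definition sinv :: "'a set \<Rightarrow> ('a \<Rightarrow> 'a \<Rightarrow> 'a) \<Rightarrow> 'a \<Rightarrow> 'a" where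
  "sinv S m a = (THE b. b \<in> S \<and> m (m a b) a = a \<and> m (m b a) b = b)"

definition idems :: "'a set \<Rightarrow> ('a \<Rightarrow> 'a \<Rightarrow> 'a) \<Rightarrow> 'a set" where
  "idems S m = {e \<in> S. m e e = e}"

definition nat_le :: "'a set \<Rightarrow> ('a \<Rightarrow> 'a \<Rightarrow> 'a) \<Rightarrow> 'a \<Rightarrow> 'a \<Rightarrow> bool" where
  "nat_le S m s t \<longleftrightarrow> s \<in> S \<and> t \<in> S \<and> (\<exists>e\<in>idems S m. s = m e t)"

definition semilattice_of_groups :: "'a set \<Rightarrow> ('a \<Rightarrow> 'a \<Rightarrow> 'a) \<Rightarrow> bool" where
  "semilattice_of_groups A m \<longleftrightarrow> inverse_semigroup A m \<and>
     (\<forall>e\<in>idems A m. \<forall>a\<in>A. m e a = m a e)"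

definition group_comp :: "'a set \<Rightarrow> ('a \<Rightarrow> 'a \<Rightarrow> 'a) \<Rightarrow> 'a \<Rightarrow> 'a set" where
  "group_comp A m e = {a \<in> A. m a (sinv A m a) = e \<and> m (sinv A m a) a = e}"

definition shom :: "'a set \<Rightarrow> ('a \<Rightarrow> 'a \<Rightarrow> 'a) \<Rightarrow> 'b set \<Rightarrow> ('b \<Rightarrow> 'b \<Rightarrow> 'b) \<Rightarrow> ('a \<Rightarrow> 'b) \<Rightarrow> bool" where
  "shom S m T n h \<longleftrightarrow> (\<forall>a\<in>S. h a \<in> T) \<and> (\<forall>a\<in>S. \<forall>b\<in>S. h (m a b) = n (h a) (h b))"

definition is_extension ::
  "'a set \<Rightarrow> ('a \<Rightarrow> 'a \<Rightarrow> 'a) \<Rightarrow> 'u set \<Rightarrow> ('u \<Rightarrow> 'u \<Rightarrow> 'u) \<Rightarrow> 's set \<Rightarrow> ('s \<Rightarrow> 's \<Rightarrow> 's)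
   \<Rightarrow> ('a \<Rightarrow> 'u) \<Rightarrow> ('u \<Rightarrow> 's) \<Rightarrow> bool" where
  "is_extension A mA U mU S mS i j \<longleftrightarrow>
     semilattice_of_groups A mA \<and> inverse_semigroup U mU \<and> inverse_semigroup S mS \<and>
     shom A mA U mU i \<and> inj_on i A \<and>
     shom U mU S mS j \<and> j ` U = S \<and>
     (\<forall>e\<in>idems U mU. \<forall>f\<in>idems U mU. j e = j f \<longrightarrow> e = f) \<and>
     i ` A = {u \<in> U. j u \<in> idems S mS}"

definition is_transversal ::
  "'u set \<Rightarrow> ('u \<Rightarrow> 'u \<Rightarrow> 'u) \<Rightarrow> 's set \<Rightarrow> ('s \<Rightarrow> 's \<Rightarrow> 's) \<Rightarrow> ('u \<Rightarrow> 's) \<Rightarrow> ('s \<Rightarrow> 'u) \<Rightarrow> bool" where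
  "is_transversal U mU S mS j \<rho> \<longleftrightarrow>
     (\<forall>s\<in>S. \<rho> s \<in> U \<and> j (\<rho> s) = s) \<and> (\<forall>e\<in>idems S mS. \<rho> e \<in> idems U mU)"

definition ind_alpha :: "'a set \<Rightarrow> ('a \<Rightarrow> 'u) \<Rightarrow> ('s \<Rightarrow> 'u) \<Rightarrow> 's \<Rightarrow> 'a" where
  "ind_alpha A i \<rho> e = the_inv_into A i (\<rho> e)"

definition ind_lambda ::
  "'a set \<Rightarrow> 'u set \<Rightarrow> ('u \<Rightarrow> 'u \<Rightarrow> 'u) \<Rightarrow> ('a \<Rightarrow> 'u) \<Rightarrow> ('s \<Rightarrow> 'u) \<Rightarrow> 's \<Rightarrow> 'a \<Rightarrow> 'a" where
  "ind_lambda A U mU i \<rho> s a = the_inv_into A i (mU (mU (\<rho> s) (i a)) (sinv U mU (\<rho> s)))"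

definition ind_f ::
  "'a set \<Rightarrow> ('a \<Rightarrow> 'a \<Rightarrow> 'a) \<Rightarrow> 'u set \<Rightarrow> ('u \<Rightarrow> 'u \<Rightarrow> 'u) \<Rightarrow> 's set \<Rightarrow> ('s \<Rightarrow> 's \<Rightarrow> 's)
   \<Rightarrow> ('a \<Rightarrow> 'u) \<Rightarrow> ('s \<Rightarrow> 'u) \<Rightarrow> 's \<Rightarrow> 's \<Rightarrow> 'a" where
  "ind_f A mA U mU S mS i \<rho> s t =
     (THE a. a \<in> group_comp A mA
               (ind_alpha A i \<rho> (mS (mS (mS s t) (sinv S mS t)) (sinv S mS s))) \<and>
             mU (\<rho> s) (\<rho> t) = mU (i a) (\<rho> (mS s t)))"

end

theory Submission
  imports Defs
begin

text \<open>Put \<open>u = \<rho> s \<rho> t\<close> and \<open>v = \<rho> (s t)\<close>. Both lie over \<open>s t\<close>, and \<open>j\<close> separates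
  idempotents, so \<open>u\<close> and \<open>v\<close> have the same domain and range idempotents. Hence \<open>f(s,t)\<close> is the
  element of \<open>A\<close> mapped by \<open>i\<close> to \<open>u v\<^sup>-\<^sup>1\<close>, and it equals the idempotent \<open>\<alpha>((s t)(s t)\<^sup>-\<^sup>1)\<close>
  exactly when \<open>\<rho> s \<rho> t = \<rho> (s t)\<close>. So \<open>\<Lambda>\<close> is Sieben iff \<open>\<rho> s \<rho> e = \<rho> (s e)\<close> and
  \<open>\<rho> e \<rho> s = \<rho> (e s)\<close> for all idempotents \<open>e\<close>. The second identity makes \<open>\<rho>\<close> order-preserving,
  since \<open>s \<le> t\<close> means \<open>s = e t\<close>. Conversely, if \<open>\<rho>\<close> preserves the order, then \<open>\<rho> (e s)\<close> and
  \<open>\<rho> e \<rho> s\<close> (resp. \<open>\<rho> (s e)\<close> and \<open>\<rho> s \<rho> e\<close>) lie below \<open>\<rho> s\<close> and over the same element of \<open>S\<close>; an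
  idempotent-separating homomorphism is injective on principal order ideals, because \<open>w \<le> v\<close>
  forces \<open>w = w w\<^sup>-\<^sup>1 v\<close>.\<close>

locale inv_semigroup =
  fixes S :: "'a set" and mult :: "'a \<Rightarrow> 'a \<Rightarrow> 'a" (infixl "\<cdot>" 70)
  assumes inverse_semigroup: "inverse_semigroup S (\<cdot>)"
begin

abbreviation inv :: "'a \<Rightarrow> 'a" where "inv \<equiv> sinv S (\<cdot>)"

abbreviation E :: "'a set" where "E \<equiv> idems S (\<cdot>)"

lemma mult_closed [simp]: "a \<in> S \<Longrightarrow> b \<in> S \<Longrightarrow> a \<cdot> b \<in> S"
  using inverse_semigroup unfolding inverse_semigroup_def semigroup_on_def by blast

lemma mult_assoc [simp]: "a \<in> S \<Longrightarrow> b \<in> S \<Longrightarrow> c \<in> S \<Longrightarrow> a \<cdot> b \<cdot> c = a \<cdot> (b \<cdot> c)"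
  using inverse_semigroup unfolding inverse_semigroup_def semigroup_on_def by blast

lemma ex1_inverse: "a \<in> S \<Longrightarrow> \<exists>!b. b \<in> S \<and> a \<cdot> b \<cdot> a = a \<and> b \<cdot> a \<cdot> b = b"
  using inverse_semigroup unfolding inverse_semigroup_def by blast

lemma inverse: "a \<in> S \<Longrightarrow> inv a \<in> S \<and> a \<cdot> inv a \<cdot> a = a \<and> inv a \<cdot> a \<cdot> inv a = inv a"
  unfolding sinv_def by (rule theI'[OF ex1_inverse])

lemma inv_closed [simp]: "a \<in> S \<Longrightarrow> inv a \<in> S"
  using inverse by blast

lemma mult_inv_mult [simp]: "a \<in> S \<Longrightarrow> a \<cdot> (inv a \<cdot> a) = a"
  using inverse by force

lemma inv_mult_inv [simp]: "a \<in> S \<Longrightarrow> inv a \<cdot> (a \<cdot> inv a) = inv a"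
  using inverse by force

lemma mult_inv_mult_left [simp]: "a \<in> S \<Longrightarrow> y \<in> S \<Longrightarrow> a \<cdot> (inv a \<cdot> (a \<cdot> y)) = a \<cdot> y"
  by (metis mult_assoc mult_closed inv_closed mult_inv_mult)

lemma inv_mult_inv_left [simp]: "a \<in> S \<Longrightarrow> y \<in> S \<Longrightarrow> inv a \<cdot> (a \<cdot> (inv a \<cdot> y)) = inv a \<cdot> y"
  by (metis mult_assoc mult_closed inv_closed inv_mult_inv)

lemma inv_unique: "a \<in> S \<Longrightarrow> b \<in> S \<Longrightarrow> a \<cdot> b \<cdot> a = a \<Longrightarrow> b \<cdot> a \<cdot> b = b \<Longrightarrow> inv a = b"
  unfolding sinv_def by (rule the1_equality[OF ex1_inverse]) auto

lemma inv_inv [simp]: "a \<in> S \<Longrightarrow> inv (inv a) = a"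
  by (rule inv_unique) auto

lemma idemsI: "e \<in> S \<Longrightarrow> e \<cdot> e = e \<Longrightarrow> e \<in> E"
  by (simp add: idems_def)

lemma idems_closed: "e \<in> E \<Longrightarrow> e \<in> S"
  by (simp add: idems_def)

lemma idem_mult_idem: "e \<in> E \<Longrightarrow> e \<cdot> e = e"
  by (simp add: idems_def)

lemma idem_mult_idem_left: "e \<in> E \<Longrightarrow> y \<in> S \<Longrightarrow> e \<cdot> (e \<cdot> y) = e \<cdot> y"
  by (metis mult_assoc idems_closed idem_mult_idem)

lemma inv_idem: "e \<in> E \<Longrightarrow> inv e = e"
  by (rule inv_unique) (auto simp: idems_closed idem_mult_idem)

lemma mult_inv_idem: "a \<in> S \<Longrightarrow> a \<cdot> inv a \<in> E"
  by (rule idemsI) auto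

lemma inv_mult_idem: "a \<in> S \<Longrightarrow> inv a \<cdot> a \<in> E"
  by (rule idemsI) auto

text \<open>The inverse \<open>x\<close> of \<open>e \<cdot> f\<close> is fixed by \<open>x \<mapsto> f \<cdot> x \<cdot> e\<close>, which makes it idempotent and hence
  self-inverse.\<close>
lemma idem_mult_closed:
  assumes e: "e \<in> E" and f: "f \<in> E"
  shows "e \<cdot> f \<in> E"
proof -
  have eS: "e \<in> S" and fS: "f \<in> S" using e f by (auto simp: idems_closed)
  define x where "x = inv (e \<cdot> f)"
  have xS: "x \<in> S" using eS fS by (simp add: x_def)
  have efx: "e \<cdot> (f \<cdot> (x \<cdot> (e \<cdot> f))) = e \<cdot> f"
    unfolding x_def using eS fS by (metis mult_assoc mult_closed inv_closed mult_inv_mult)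
  have xef: "x \<cdot> (e \<cdot> (f \<cdot> x)) = x"
    unfolding x_def using eS fS by (metis mult_assoc mult_closed inv_closed inv_mult_inv)
  have xefx: "x \<cdot> (e \<cdot> (f \<cdot> (x \<cdot> e))) = x \<cdot> e"
    using arg_cong[OF xef, of "\<lambda>z. z \<cdot> e"] eS fS xS by simp
  have "inv (e \<cdot> f) = f \<cdot> x \<cdot> e"
    by (rule inv_unique)
      (use eS fS xS efx xefx in \<open>simp_all add: idem_mult_idem_left e f\<close>)
  then have x_eq: "f \<cdot> (x \<cdot> e) = x" using eS fS xS by (simp add: x_def)
  have "x \<cdot> x = f \<cdot> (x \<cdot> e) \<cdot> (f \<cdot> (x \<cdot> e))" by (simp add: x_eq)
  also have "\<dots> = f \<cdot> (x \<cdot> (e \<cdot> (f \<cdot> (x \<cdot> e))))" using eS fS xS by simp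
  also have "\<dots> = x" using xefx x_eq by simp
  finally have "x \<in> E" by (rule idemsI[OF xS])
  then have "inv x = x" by (rule inv_idem)
  moreover have "inv x = e \<cdot> f" using eS fS by (simp add: x_def)
  ultimately show ?thesis using \<open>x \<in> E\<close> by simp
qed

lemma idem_comm:
  assumes e: "e \<in> E" and f: "f \<in> E"
  shows "e \<cdot> f = f \<cdot> e"
proof -
  have eS: "e \<in> S" and fS: "f \<in> S" using e f by (auto simp: idems_closed)
  have ef: "e \<cdot> (f \<cdot> (e \<cdot> f)) = e \<cdot> f" and fe: "f \<cdot> (e \<cdot> (f \<cdot> e)) = f \<cdot> e"
    using idem_mult_idem[OF idem_mult_closed[OF e f]] idem_mult_idem[OF idem_mult_closed[OF f e]]
      eS fS by simp_all
  have "inv (e \<cdot> f) = f \<cdot> e"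
    by (rule inv_unique) (use eS fS ef fe in \<open>simp_all add: idem_mult_idem_left e f\<close>)
  then show ?thesis using inv_idem[OF idem_mult_closed[OF e f]] by simp
qed

lemma idem_comm_left:
  "e \<in> E \<Longrightarrow> f \<in> E \<Longrightarrow> y \<in> S \<Longrightarrow> e \<cdot> (f \<cdot> y) = f \<cdot> (e \<cdot> y)"
  by (metis idem_comm idems_closed mult_assoc)

lemma inv_mult:
  assumes a: "a \<in> S" and b: "b \<in> S"
  shows "inv (a \<cdot> b) = inv b \<cdot> inv a"
proof (rule inv_unique)
  have comm: "b \<cdot> (inv b \<cdot> (inv a \<cdot> (a \<cdot> y))) = inv a \<cdot> (a \<cdot> (b \<cdot> (inv b \<cdot> y)))" if "y \<in> S" for y
    using idem_comm_left[OF mult_inv_idem[OF b] inv_mult_idem[OF a] that] a b that by simp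
  show "a \<cdot> b \<cdot> (inv b \<cdot> inv a) \<cdot> (a \<cdot> b) = a \<cdot> b"
    using a b by (simp add: comm)
  show "inv b \<cdot> inv a \<cdot> (a \<cdot> b) \<cdot> (inv b \<cdot> inv a) = inv b \<cdot> inv a"
    using a b by (simp add: comm[symmetric])
qed (use a b in simp_all)

lemma mult_idem_mult_inv:
  "s \<in> S \<Longrightarrow> e \<in> E \<Longrightarrow> s \<cdot> e \<cdot> inv (s \<cdot> e) = s \<cdot> e \<cdot> inv s"
  by (simp add: inv_mult inv_idem idems_closed idem_mult_idem_left)

lemma idem_mult_mult_inv:
  assumes s: "s \<in> S" and e: "e \<in> E"
  shows "e \<cdot> s \<cdot> inv (e \<cdot> s) = e \<cdot> s \<cdot> inv s"
proof -
  have "s \<cdot> inv s \<cdot> e = e \<cdot> (s \<cdot> inv s)" using idem_comm[OF mult_inv_idem[OF s] e] .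
  then show ?thesis
    using s idems_closed[OF e] by (simp add: inv_mult inv_idem e idem_mult_idem_left)
qed

lemma mult_inv_eq_iff:
  assumes u: "u \<in> S" and v: "v \<in> S" and uv: "inv u \<cdot> u = inv v \<cdot> v"
  shows "u \<cdot> inv v = v \<cdot> inv v \<longleftrightarrow> u = v"
proof
  assume uv': "u \<cdot> inv v = v \<cdot> inv v"
  have "u = u \<cdot> (inv u \<cdot> u)" using u by simp
  also have "\<dots> = u \<cdot> inv v \<cdot> v" using u v by (simp only: uv mult_assoc inv_closed)
  also have "\<dots> = v" using v by (simp add: uv')
  finally show "u = v" .
qed simp

lemma nat_le_idem_left: "e \<in> E \<Longrightarrow> s \<in> S \<Longrightarrow> nat_le S (\<cdot>) (e \<cdot> s) s"
  unfolding nat_le_def by (auto simp: idems_closed)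

text \<open>\<open>s \<cdot> e = (s \<cdot> e \<cdot> inv s) \<cdot> s\<close>, and the conjugate \<open>s \<cdot> e \<cdot> inv s\<close> of an idempotent is idempotent.\<close>
lemma nat_le_idem_right:
  assumes s: "s \<in> S" and e: "e \<in> E"
  shows "nat_le S (\<cdot>) (s \<cdot> e) s"
proof -
  have eS: "e \<in> S" using e by (rule idems_closed)
  have comm: "e \<cdot> (inv s \<cdot> (s \<cdot> y)) = inv s \<cdot> (s \<cdot> (e \<cdot> y))" if "y \<in> S" for y
    using idem_comm_left[OF e inv_mult_idem[OF s] that] s eS that by simp
  have idem: "s \<cdot> e \<cdot> inv s \<in> E"
    by (rule idemsI) (use s eS in \<open>simp_all add: comm idem_mult_idem_left e\<close>)
  moreover have "s \<cdot> e = s \<cdot> e \<cdot> inv s \<cdot> s"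
    using s eS idem_comm[OF e inv_mult_idem[OF s]] by simp
  ultimately show ?thesis unfolding nat_le_def using s eS by (intro conjI bexI) auto
qed

lemma nat_le_eq_range_mult:
  assumes "nat_le S (\<cdot>) w v"
  shows "w = w \<cdot> inv w \<cdot> v"
proof -
  obtain g where g: "g \<in> E" and v: "v \<in> S" and w: "w = g \<cdot> v"
    using assms unfolding nat_le_def by blast
  have gS: "g \<in> S" using g by (rule idems_closed)
  have "w \<cdot> inv w \<cdot> v = g \<cdot> (v \<cdot> inv v \<cdot> (g \<cdot> v))"
    using gS v by (simp add: w inv_mult inv_idem g)
  also have "\<dots> = g \<cdot> v"
    using idem_comm_left[OF mult_inv_idem[OF v] g v] gS v by (simp add: idem_mult_idem_left g)
  finally show ?thesis using w by simp
qed

end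

lemma shom_sinv:
  assumes "inverse_semigroup S m" and "inverse_semigroup T n" and h: "shom S m T n h" and a: "a \<in> S"
  shows "h (sinv S m a) = sinv T n (h a)"
proof -
  interpret S: inv_semigroup S m by (rule inv_semigroup.intro) fact
  interpret T: inv_semigroup T n by (rule inv_semigroup.intro) fact
  have h_mult: "h (m x y) = n (h x) (h y)" and h_closed: "h x \<in> T" if "x \<in> S" "y \<in> S" for x y
    using h that unfolding shom_def by auto
  show ?thesis
  proof (rule T.inv_unique[symmetric])
    show "n (n (h a) (h (S.inv a))) (h a) = h a"
      using a by (metis h_mult S.mult_assoc S.mult_closed S.inv_closed S.mult_inv_mult)
    show "n (n (h (S.inv a)) (h a)) (h (S.inv a)) = h (S.inv a)"
      using a by (metis h_mult S.mult_assoc S.mult_closed S.inv_closed S.inv_mult_inv)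
  qed (use a h_closed in auto)
qed

locale transversal_of_extension =
  fixes A :: "'a set" and mA :: "'a \<Rightarrow> 'a \<Rightarrow> 'a"
    and U :: "'u set" and mU :: "'u \<Rightarrow> 'u \<Rightarrow> 'u" (infixl "\<cdot>" 70)
    and S :: "'s set" and mS :: "'s \<Rightarrow> 's \<Rightarrow> 's" (infixl "\<star>" 70)
    and i :: "'a \<Rightarrow> 'u" and j :: "'u \<Rightarrow> 's" and \<rho> :: "'s \<Rightarrow> 'u"
  assumes extension: "is_extension A mA U (\<cdot>) S (\<star>) i j"
    and transversal: "is_transversal U (\<cdot>) S (\<star>) j \<rho>"
begin

sublocale A: inv_semigroup A mA
  using extension unfolding is_extension_def semilattice_of_groups_def by unfold_locales blast

sublocale U: inv_semigroup U "(\<cdot>)"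
  using extension unfolding is_extension_def by unfold_locales blast

sublocale S: inv_semigroup S "(\<star>)"
  using extension unfolding is_extension_def by unfold_locales blast

abbreviation \<alpha> :: "'s \<Rightarrow> 'a" where "\<alpha> \<equiv> ind_alpha A i \<rho>"

abbreviation f :: "'s \<Rightarrow> 's \<Rightarrow> 'a" where "f \<equiv> ind_f A mA U (\<cdot>) S (\<star>) i \<rho>"

lemma i_closed: "a \<in> A \<Longrightarrow> i a \<in> U"
  using extension unfolding is_extension_def shom_def by blast

lemma i_mult: "a \<in> A \<Longrightarrow> b \<in> A \<Longrightarrow> i (mA a b) = i a \<cdot> i b"
  using extension unfolding is_extension_def shom_def by blast

lemma inj_on_i: "inj_on i A"
  using extension unfolding is_extension_def by blast

lemma i_inv: "a \<in> A \<Longrightarrow> i (A.inv a) = U.inv (i a)"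
  using extension shom_sinv[of A mA U "(\<cdot>)" i a]
  unfolding is_extension_def semilattice_of_groups_def by blast

lemma image_i: "i ` A = {u \<in> U. j u \<in> S.E}"
  using extension unfolding is_extension_def by blast

lemma j_closed: "u \<in> U \<Longrightarrow> j u \<in> S"
  using extension unfolding is_extension_def shom_def by blast

lemma j_mult: "u \<in> U \<Longrightarrow> v \<in> U \<Longrightarrow> j (u \<cdot> v) = j u \<star> j v"
  using extension unfolding is_extension_def shom_def by blast

lemma j_inv: "u \<in> U \<Longrightarrow> j (U.inv u) = S.inv (j u)"
  using extension shom_sinv[of U "(\<cdot>)" S "(\<star>)" j u] unfolding is_extension_def by blast

lemma idem_separating: "e \<in> U.E \<Longrightarrow> e' \<in> U.E \<Longrightarrow> j e = j e' \<Longrightarrow> e = e'"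
  using extension unfolding is_extension_def by blast

lemma \<rho>_closed: "s \<in> S \<Longrightarrow> \<rho> s \<in> U"
  using transversal unfolding is_transversal_def by blast

lemma j_\<rho>: "s \<in> S \<Longrightarrow> j (\<rho> s) = s"
  using transversal unfolding is_transversal_def by blast

lemma \<rho>_idem: "e \<in> S.E \<Longrightarrow> \<rho> e \<in> U.E"
  using transversal unfolding is_transversal_def by blast

lemma mult_inv_eq_if_same_image:
  "u \<in> U \<Longrightarrow> v \<in> U \<Longrightarrow> j u = j v \<Longrightarrow> u \<cdot> U.inv u = v \<cdot> U.inv v"
  by (rule idem_separating) (simp_all add: U.mult_inv_idem j_mult j_inv)

lemma inv_mult_eq_if_same_image:
  "u \<in> U \<Longrightarrow> v \<in> U \<Longrightarrow> j u = j v \<Longrightarrow> U.inv u \<cdot> u = U.inv v \<cdot> v"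
  by (rule idem_separating) (simp_all add: U.inv_mult_idem j_mult j_inv)

lemma j_idem: "e \<in> U.E \<Longrightarrow> j e \<in> S.E"
  by (rule S.idemsI) (simp_all add: j_closed j_mult[symmetric] U.idems_closed U.idem_mult_idem)

lemma \<rho>_j_idem: "e \<in> U.E \<Longrightarrow> \<rho> (j e) = e"
  by (rule idem_separating) (simp_all add: \<rho>_idem j_idem j_\<rho> S.idems_closed)

lemma alpha_closed: "x \<in> S.E \<Longrightarrow> \<alpha> x \<in> A"
  and i_alpha: "x \<in> S.E \<Longrightarrow> i (\<alpha> x) = \<rho> x"
proof -
  assume "x \<in> S.E"
  then have "\<rho> x \<in> i ` A" using image_i \<rho>_closed j_\<rho> S.idems_closed by auto
  then show "\<alpha> x \<in> A" "i (\<alpha> x) = \<rho> x"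
    unfolding ind_alpha_def
    by (auto intro: the_inv_into_into[OF inj_on_i] f_the_inv_into_f[OF inj_on_i])
qed

lemma group_comp_alpha_iff:
  assumes x: "x \<in> S.E" and a: "a \<in> A"
  shows "a \<in> group_comp A mA (\<alpha> x) \<longleftrightarrow> i a \<cdot> U.inv (i a) = \<rho> x \<and> U.inv (i a) \<cdot> i a = \<rho> x"
proof -
  have "mA a (A.inv a) = \<alpha> x \<longleftrightarrow> i a \<cdot> U.inv (i a) = \<rho> x"
    using inj_on_eq_iff[OF inj_on_i, of "mA a (A.inv a)" "\<alpha> x"] a alpha_closed[OF x]
    by (simp add: i_mult i_inv i_alpha[OF x])
  moreover have "mA (A.inv a) a = \<alpha> x \<longleftrightarrow> U.inv (i a) \<cdot> i a = \<rho> x"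
    using inj_on_eq_iff[OF inj_on_i, of "mA (A.inv a) a" "\<alpha> x"] a alpha_closed[OF x]
    by (simp add: i_mult i_inv i_alpha[OF x])
  ultimately show ?thesis using a unfolding group_comp_def by simp
qed

lemma \<rho>_range: "s \<in> S \<Longrightarrow> \<rho> (s \<star> S.inv s) = \<rho> s \<cdot> U.inv (\<rho> s)"
  using \<rho>_j_idem[OF U.mult_inv_idem[OF \<rho>_closed]] by (simp add: j_mult j_inv \<rho>_closed j_\<rho>)

lemma \<rho>_mult_range:
  "s \<in> S \<Longrightarrow> t \<in> S \<Longrightarrow> \<rho> s \<cdot> \<rho> t \<cdot> U.inv (\<rho> s \<cdot> \<rho> t) = \<rho> (s \<star> t) \<cdot> U.inv (\<rho> (s \<star> t))"
  by (rule mult_inv_eq_if_same_image) (simp_all add: j_mult \<rho>_closed j_\<rho>)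

lemma \<rho>_mult_domain:
  "s \<in> S \<Longrightarrow> t \<in> S \<Longrightarrow> U.inv (\<rho> s \<cdot> \<rho> t) \<cdot> (\<rho> s \<cdot> \<rho> t) = U.inv (\<rho> (s \<star> t)) \<cdot> \<rho> (s \<star> t)"
  by (rule inv_mult_eq_if_same_image) (simp_all add: j_mult \<rho>_closed j_\<rho>)

lemma ind_f_condition_iff:
  assumes s: "s \<in> S" and t: "t \<in> S" and a: "a \<in> A"
  shows "a \<in> group_comp A mA (\<alpha> (s \<star> t \<star> S.inv (s \<star> t))) \<and> \<rho> s \<cdot> \<rho> t = i a \<cdot> \<rho> (s \<star> t)
     \<longleftrightarrow> i a = \<rho> s \<cdot> \<rho> t \<cdot> U.inv (\<rho> (s \<star> t))"
proof -
  define u v x where "u = \<rho> s \<cdot> \<rho> t" and "v = \<rho> (s \<star> t)" and "x = s \<star> t \<star> S.inv (s \<star> t)"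
  have u: "u \<in> U" and v: "v \<in> U" and ia: "i a \<in> U"
    using s t a by (simp_all add: u_def v_def \<rho>_closed i_closed)
  have x: "x \<in> S.E" unfolding x_def using s t by (simp add: S.mult_inv_idem del: S.mult_assoc)
  have range: "u \<cdot> U.inv u = v \<cdot> U.inv v" and domain: "U.inv u \<cdot> u = U.inv v \<cdot> v"
    using s t by (simp_all only: u_def v_def \<rho>_mult_range \<rho>_mult_domain)
  have \<rho>x: "\<rho> x = v \<cdot> U.inv v" unfolding x_def v_def using s t by (simp only: \<rho>_range S.mult_closed)
  have domain_left: "U.inv v \<cdot> (v \<cdot> y) = U.inv u \<cdot> (u \<cdot> y)" if "y \<in> U" for y
    using arg_cong[OF domain, of "\<lambda>z. z \<cdot> y"] u v that by simp
  have "a \<in> group_comp A mA (\<alpha> x) \<and> u = i a \<cdot> v \<longleftrightarrow> i a = u \<cdot> U.inv v"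
  proof
    assume "a \<in> group_comp A mA (\<alpha> x) \<and> u = i a \<cdot> v"
    then have "U.inv (i a) \<cdot> i a = v \<cdot> U.inv v" and u_eq: "u = i a \<cdot> v"
      using group_comp_alpha_iff[OF x a] \<rho>x by simp_all
    then have "i a = i a \<cdot> (v \<cdot> U.inv v)" using U.mult_inv_mult[OF ia] by simp
    also have "\<dots> = u \<cdot> U.inv v" using v ia by (simp add: u_eq)
    finally show "i a = u \<cdot> U.inv v" .
  next
    assume ia_eq: "i a = u \<cdot> U.inv v"
    have inv_ia: "U.inv (u \<cdot> U.inv v) = v \<cdot> U.inv u" using u v by (simp add: U.inv_mult)
    have "i a \<cdot> U.inv (i a) = \<rho> x"
      using u v by (simp add: ia_eq inv_ia domain_left \<rho>x) (simp add: range)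
    moreover have "U.inv (i a) \<cdot> i a = \<rho> x"
      using u v by (simp add: ia_eq inv_ia domain_left[symmetric] \<rho>x)
    moreover have "u = i a \<cdot> v" using u v by (simp add: ia_eq domain[symmetric])
    ultimately show "a \<in> group_comp A mA (\<alpha> x) \<and> u = i a \<cdot> v"
      using group_comp_alpha_iff[OF x a] by simp
  qed
  then show ?thesis by (simp only: u_def v_def x_def)
qed

lemma
  assumes s: "s \<in> S" and t: "t \<in> S"
  shows ind_f_closed: "f s t \<in> A"
    and i_ind_f: "i (f s t) = \<rho> s \<cdot> \<rho> t \<cdot> U.inv (\<rho> (s \<star> t))"
proof -
  define w where "w = \<rho> s \<cdot> \<rho> t \<cdot> U.inv (\<rho> (s \<star> t))"
  have "w \<in> U" using s t by (simp add: w_def \<rho>_closed)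
  moreover have "j w = s \<star> t \<star> S.inv (s \<star> t)"
    using s t by (simp add: w_def j_mult j_inv \<rho>_closed j_\<rho>)
  ultimately have "w \<in> i ` A"
    using s t S.mult_inv_idem[of "s \<star> t"] by (simp add: image_i del: S.mult_assoc)
  then obtain a where a: "a \<in> A" and ia: "i a = w" by (metis imageE)
  have cond_iff: "a' \<in> group_comp A mA (\<alpha> (s \<star> t \<star> S.inv (s \<star> t))) \<and> \<rho> s \<cdot> \<rho> t = i a' \<cdot> \<rho> (s \<star> t)
      \<longleftrightarrow> a' = a" for a'
  proof (cases "a' \<in> A")
    case True
    then show ?thesis
      using ind_f_condition_iff[OF s t True] a ia inj_on_eq_iff[OF inj_on_i True a] by (simp add: w_def)
  qed (auto simp: group_comp_def a)
  have index: "s \<star> t \<star> S.inv t \<star> S.inv s = s \<star> t \<star> S.inv (s \<star> t)"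
    using s t by (simp add: S.inv_mult)
  have "f s t = a"
    unfolding ind_f_def index cond_iff by simp
  then show "f s t \<in> A" "i (f s t) = \<rho> s \<cdot> \<rho> t \<cdot> U.inv (\<rho> (s \<star> t))"
    using a ia by (simp_all add: w_def)
qed

lemma ind_f_eq_alpha_iff:
  assumes s: "s \<in> S" and t: "t \<in> S"
  shows "f s t = \<alpha> (s \<star> t \<star> S.inv (s \<star> t)) \<longleftrightarrow> \<rho> s \<cdot> \<rho> t = \<rho> (s \<star> t)"
proof -
  define u v x where "u = \<rho> s \<cdot> \<rho> t" and "v = \<rho> (s \<star> t)" and "x = s \<star> t \<star> S.inv (s \<star> t)"
  have u: "u \<in> U" and v: "v \<in> U" using s t by (simp_all add: u_def v_def \<rho>_closed)
  have x: "x \<in> S.E" unfolding x_def using s t by (simp add: S.mult_inv_idem del: S.mult_assoc)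
  have "f s t = \<alpha> x \<longleftrightarrow> i (f s t) = i (\<alpha> x)"
    using inj_on_eq_iff[OF inj_on_i ind_f_closed[OF s t] alpha_closed[OF x]] by (rule sym)
  also have "\<dots> \<longleftrightarrow> u \<cdot> U.inv v = v \<cdot> U.inv v"
    unfolding i_ind_f[OF s t] i_alpha[OF x] unfolding x_def u_def v_def
    using s t by (simp only: \<rho>_range S.mult_closed)
  also have "\<dots> \<longleftrightarrow> u = v"
    using U.mult_inv_eq_iff[OF u v] \<rho>_mult_domain[OF s t] by (simp add: u_def v_def)
  finally show ?thesis by (simp add: u_def v_def x_def)
qed

lemma eq_if_nat_le_same_image:
  assumes "nat_le U (\<cdot>) w v" and "nat_le U (\<cdot>) w' v" and "j w = j w'"
  shows "w = w'"
proof -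
  have w: "w \<in> U" and w': "w' \<in> U" using assms by (simp_all add: nat_le_def)
  have "w = w \<cdot> U.inv w \<cdot> v" using assms(1) by (rule U.nat_le_eq_range_mult)
  also have "\<dots> = w' \<cdot> U.inv w' \<cdot> v" using mult_inv_eq_if_same_image[OF w w' assms(3)] by simp
  also have "\<dots> = w'" using assms(2) by (rule U.nat_le_eq_range_mult[symmetric])
  finally show ?thesis .
qed

lemma \<rho>_mult_idem_if_order_preserving:
  assumes mono: "\<forall>s\<in>S. \<forall>t\<in>S. nat_le S (\<star>) s t \<longrightarrow> nat_le U (\<cdot>) (\<rho> s) (\<rho> t)"
    and s: "s \<in> S" and e: "e \<in> S.E"
  shows "\<rho> s \<cdot> \<rho> e = \<rho> (s \<star> e)" and "\<rho> e \<cdot> \<rho> s = \<rho> (e \<star> s)"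
proof -
  have eS: "e \<in> S" using e by (rule S.idems_closed)
  have "nat_le U (\<cdot>) (\<rho> (s \<star> e)) (\<rho> s)"
    using mono s eS S.nat_le_idem_right[OF s e] by simp
  moreover have "nat_le U (\<cdot>) (\<rho> s \<cdot> \<rho> e) (\<rho> s)"
    using U.nat_le_idem_right[OF \<rho>_closed[OF s] \<rho>_idem[OF e]] .
  ultimately show "\<rho> s \<cdot> \<rho> e = \<rho> (s \<star> e)"
    using s eS by (intro eq_if_nat_le_same_image) (simp_all add: j_mult \<rho>_closed j_\<rho>)
  have "nat_le U (\<cdot>) (\<rho> (e \<star> s)) (\<rho> s)"
    using mono s eS S.nat_le_idem_left[OF e s] by simp
  moreover have "nat_le U (\<cdot>) (\<rho> e \<cdot> \<rho> s) (\<rho> s)"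
    using U.nat_le_idem_left[OF \<rho>_idem[OF e] \<rho>_closed[OF s]] .
  ultimately show "\<rho> e \<cdot> \<rho> s = \<rho> (e \<star> s)"
    using s eS by (intro eq_if_nat_le_same_image) (simp_all add: j_mult \<rho>_closed j_\<rho>)
qed

lemma order_preserving_if_\<rho>_mult_idem:
  assumes "\<forall>s\<in>S. \<forall>e\<in>S.E. \<rho> e \<cdot> \<rho> s = \<rho> (e \<star> s)"
    and "nat_le S (\<star>) s t"
  shows "nat_le U (\<cdot>) (\<rho> s) (\<rho> t)"
proof -
  obtain e where e: "e \<in> S.E" and t: "t \<in> S" and s_eq: "s = e \<star> t"
    using assms(2) unfolding nat_le_def by blast
  then have "\<rho> s = \<rho> e \<cdot> \<rho> t" using assms(1) by simp
  then show ?thesis using U.nat_le_idem_left[OF \<rho>_idem[OF e] \<rho>_closed[OF t]] by simp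
qed

lemma ind_f_idem_right_iff:
  assumes s: "s \<in> S" and e: "e \<in> S.E"
  shows "f s e = \<alpha> (s \<star> e \<star> S.inv s) \<longleftrightarrow> \<rho> s \<cdot> \<rho> e = \<rho> (s \<star> e)"
  using ind_f_eq_alpha_iff[OF s S.idems_closed[OF e]] by (simp only: S.mult_idem_mult_inv[OF s e])

lemma ind_f_idem_left_iff:
  assumes s: "s \<in> S" and e: "e \<in> S.E"
  shows "f e s = \<alpha> (e \<star> s \<star> S.inv s) \<longleftrightarrow> \<rho> e \<cdot> \<rho> s = \<rho> (e \<star> s)"
  using ind_f_eq_alpha_iff[OF S.idems_closed[OF e] s] by (simp only: S.idem_mult_mult_inv[OF s e])

lemma sieben_iff_order_preserving:
  "(\<forall>s\<in>S. \<forall>e\<in>S.E. f s e = \<alpha> (s \<star> e \<star> S.inv s) \<and> f e s = \<alpha> (e \<star> s \<star> S.inv s))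
     \<longleftrightarrow> (\<forall>s\<in>S. \<forall>t\<in>S. nat_le S (\<star>) s t \<longrightarrow> nat_le U (\<cdot>) (\<rho> s) (\<rho> t))"
proof -
  have "(\<forall>s\<in>S. \<forall>e\<in>S.E. f s e = \<alpha> (s \<star> e \<star> S.inv s) \<and> f e s = \<alpha> (e \<star> s \<star> S.inv s))
      \<longleftrightarrow> (\<forall>s\<in>S. \<forall>e\<in>S.E. \<rho> s \<cdot> \<rho> e = \<rho> (s \<star> e) \<and> \<rho> e \<cdot> \<rho> s = \<rho> (e \<star> s))"
    using ind_f_idem_right_iff ind_f_idem_left_iff by blast
  also have "\<dots> \<longleftrightarrow> (\<forall>s\<in>S. \<forall>t\<in>S. nat_le S (\<star>) s t \<longrightarrow> nat_le U (\<cdot>) (\<rho> s) (\<rho> t))"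
    using \<rho>_mult_idem_if_order_preserving order_preserving_if_\<rho>_mult_idem by blast
  finally show ?thesis .
qed

end

theorem proposition3p23:
  fixes A :: "'a set" and mA :: "'a \<Rightarrow> 'a \<Rightarrow> 'a"
    and U :: "'u set" and mU :: "'u \<Rightarrow> 'u \<Rightarrow> 'u"
    and S :: "'s set" and mS :: "'s \<Rightarrow> 's \<Rightarrow> 's"
    and i :: "'a \<Rightarrow> 'u" and j :: "'u \<Rightarrow> 's" and \<rho> :: "'s \<Rightarrow> 'u"
  assumes ext: "is_extension A mA U mU S mS i j"
    and tr: "is_transversal U mU S mS j \<rho>"
  shows "(\<forall>s\<in>S. \<forall>e\<in>idems S mS.
            ind_f A mA U mU S mS i \<rho> s e
              = ind_alpha A i \<rho> (mS (mS s e) (sinv S mS s)) \<and>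
            ind_f A mA U mU S mS i \<rho> e s
              = ind_alpha A i \<rho> (mS (mS e s) (sinv S mS s)))
         \<longleftrightarrow> (\<forall>s\<in>S. \<forall>t\<in>S. nat_le S mS s t \<longrightarrow> nat_le U mU (\<rho> s) (\<rho> t))"
  using transversal_of_extension.sieben_iff_order_preserving[OF transversal_of_extension.intro[OF ext tr]] .

end
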